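(* Let $\mathbf{x}_1,\dots,\mathbf{x}_r\in\mathbb{R}^d$ be fixed design points, $\mathbb{C}\subseteq\mathbb{R}^r$ the set of convex vectors on these points, and consider the Bayesian model in the context (known or unknown covariance). For $n\ge 0$ and $\ell\ge 1$, let $\phi_n$ and $\phi_{n+\ell}$ denote the posterior (marginal) densities of $\mathbf{F}\mid\mathscr{A}_n$ and $\mathbf{F}\mid\mathscr{A}_{n+\ell}$, and let $L_{n+\ell,n}(\mathbf{y})=\phi_{n+\ell}(\mathbf{y})/\phi_n(\mathbf{y})$. Let $\mathbf{Y}_n$ be a sample drawn from the density $\phi_n$ (independently of the observations $\mathbf{Y}_{n+1},\dots,\mathbf{Y}_{n+\ell}$ given $\mathscr{A}_n$). Then the estimator $\hat p_{n+\ell}=\mathbf{1}\{\mathbf{Y}_n\in\mathbb{C}\}\,L_{n+\ell,n}(\mathbf{Y}_n)$ satisfies, conditional on $\mathscr{A}_{n+\ell}$, $E[\hat p_{n+\ell}\mid\mathscr{A}_{n+\ell}]=P(\mathbf{F}\in\mathbb{C}\mid\mathscr{A}_{n+\ell})$ and $\mathrm{Var}(\hat p_{n+\ell}\mid\mathscr{A}_{n+\ell})<\infty$.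
   Context: A vector $\mathbf{g}\in\mathbb{R}^r$ is called convex (on $\mathbf{x}_1,\dots,\mathbf{x}_r$) if there exists a convex function $f:\mathbb{R}^d\to\mathbb{R}$ with $f(\mathbf{x}_i)=g_i$ for $i=1,\dots,r$; $\mathbb{C}$ denotes the set of all such vectors. Bayesian model: $\mathbf{F}$ is an $\mathbb{R}^r$-valued random vector drawn from a prior; observations are $\mathbf{Y}_j=\mathbf{F}+\boldsymbol{\xi}_j$, $j=1,2,\dots$, with $\boldsymbol{\xi}_j$ i.i.d. $N(\mathbf{0},\Gamma)$ independent of $\mathbf{F}$, $\Gamma$ positive definite. $\mathscr{A}_n$ is the $\sigma$-field generated by the initial information $\mathscr{A}_0$ and $\mathbf{Y}_1,\dots,\mathbf{Y}_n$. Known-covariance model: $\Gamma$ known, prior $\mathbf{F}\sim N(\boldsymbol{\mu}_0,\Lambda_0)$ with $\Lambda_0$ positive definite, posterior $N(\boldsymbol{\mu}_n,\Lambda_n)$ with $\Lambda_n^{-1}=\Lambda_{n-1}^{-1}+\Gamma^{-1}$, $\boldsymbol{\mu}_n=\Lambda_n(\Lambda_{n-1}^{-1}\boldsymbol{\mu}_{n-1}+\Gamma^{-1}\mathbf{Y}_n)$. Unknown-covariance model: normal–inverse-Wishart prior $\Gamma\sim\text{Inv-Wishart}_{\upsilon_0}(\Xi_0^{-1})$, $\mathbf{F}\mid\Gamma\sim N(\boldsymbol{\mu}_0,\Gamma/\kappa_0)$, with updates $\boldsymbol{\mu}_n=\frac{\kappa_{n-1}\boldsymbol{\mu}_{n-1}+\mathbf{Y}_n}{\kappa_{n-1}+1}$,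 $\kappa_n=\kappa_{n-1}+1$, $\upsilon_n=\upsilon_{n-1}+1$, $\Xi_n=\Xi_{n-1}+\frac{\kappa_{n-1}}{\kappa_{n-1}+1}(\mathbf{Y}_n-\boldsymbol{\mu}_{n-1})(\mathbf{Y}_n-\boldsymbol{\mu}_{n-1})^T$; the marginal posterior density of $\mathbf{F}$ is multivariate Student-$t$ with $\upsilon_n-r+1$ degrees of freedom, location $\boldsymbol{\mu}_n$ and scale matrix $\Xi_n/(\kappa_n(\upsilon_n-r+1))$. *)

theory Defs
  imports "HOL-Probability.Probability"
begin

definition convex_vectors :: "('r::finite \<Rightarrow> real^'d) \<Rightarrow> (real^'r) set" where
  "convex_vectors xs = {g. \<exists>f::real^'d \<Rightarrow> real. convex_on UNIV f \<and> (\<forall>i. f (xs i) = g $ i)}"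

definition pos_def_mat :: "real^'r^'r \<Rightarrow> bool" where
  "pos_def_mat A \<longleftrightarrow> transpose A = A \<and> (\<forall>x. x \<noteq> 0 \<longrightarrow> x \<bullet> (A *v x) > 0)"

definition outer_prod :: "real^'r \<Rightarrow> real^'r \<Rightarrow> real^'r^'r" where
  "outer_prod u v = (\<chi> i j. u $ i * v $ j)"

definition gauss_density :: "real^'r::finite \<Rightarrow> real^'r^'r \<Rightarrow> real^'r \<Rightarrow> real" where
  "gauss_density mu Sig y =
     (2 * pi) powr (- real CARD('r) / 2) * det Sig powr (-1/2)
     * exp (- (1/2) * ((y - mu) \<bullet> (matrix_inv Sig *v (y - mu))))"

definition student_t_density :: "real \<Rightarrow> real^'r::finite \<Rightarrow> real^'r^'r \<Rightarrow> real^'r \<Rightarrow> real" where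
  "student_t_density nu mu Sig y =
     Gamma ((nu + real CARD('r)) / 2)
     / (Gamma (nu / 2) * (nu * pi) powr (real CARD('r) / 2) * det Sig powr (1/2))
     * (1 + (1/nu) * ((y - mu) \<bullet> (matrix_inv Sig *v (y - mu)))) powr (- (nu + real CARD('r)) / 2)"

text \<open>Known-covariance model: posterior parameters (mu_n, Lambda_n) after observations Y 1, ..., Y n.\<close>
fun known_post :: "real^'r^'r \<Rightarrow> real^'r \<Rightarrow> real^'r^'r \<Rightarrow> (nat \<Rightarrow> real^'r) \<Rightarrow> nat
                     \<Rightarrow> (real^'r) \<times> (real^'r^'r)" where
  "known_post Gam mu0 Lam0 Y 0 = (mu0, Lam0)"
| "known_post Gam mu0 Lam0 Y (Suc k) =
     (let (mu, Lam) = known_post Gam mu0 Lam0 Y k;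
          Lam' = matrix_inv (matrix_inv Lam + matrix_inv Gam)
      in (Lam' *v (matrix_inv Lam *v mu + matrix_inv Gam *v Y (Suc k)), Lam'))"

fun unknown_post :: "real^'r \<Rightarrow> real \<Rightarrow> real \<Rightarrow> real^'r^'r \<Rightarrow> (nat \<Rightarrow> real^'r) \<Rightarrow> nat
                       \<Rightarrow> (real^'r) \<times> real \<times> real \<times> (real^'r^'r)" where
  "unknown_post mu0 ka0 up0 Xi0 Y 0 = (mu0, ka0, up0, Xi0)"
| "unknown_post mu0 ka0 up0 Xi0 Y (Suc k) =
     (let (mu, ka, up, Xi) = unknown_post mu0 ka0 up0 Xi0 Y k
      in ((1 / (ka + 1)) *\<^sub>R (ka *\<^sub>R mu + Y (Suc k)), ka + 1, up + 1,
          Xi + (ka / (ka + 1)) *\<^sub>R outer_prod (Y (Suc k) - mu) (Y (Suc k) - mu)))"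

definition unknown_post_density :: "real^'r \<Rightarrow> real \<Rightarrow> real \<Rightarrow> real^'r^'r \<Rightarrow> (nat \<Rightarrow> real^'r) \<Rightarrow> nat
                                      \<Rightarrow> real^'r::finite \<Rightarrow> real" where
  "unknown_post_density mu0 ka0 up0 Xi0 Y n =
     (case unknown_post mu0 ka0 up0 Xi0 Y n of (mu, ka, up, Xi) \<Rightarrow>
        student_t_density (up - real CARD('r) + 1) mu
          ((1 / (ka * (up - real CARD('r) + 1))) *\<^sub>R Xi))"

definition known_post_density :: "real^'r^'r \<Rightarrow> real^'r \<Rightarrow> real^'r^'r \<Rightarrow> (nat \<Rightarrow> real^'r) \<Rightarrow> nat
                                    \<Rightarrow> real^'r::finite \<Rightarrow> real" where
  "known_post_density Gam mu0 Lam0 Y n =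
     (case known_post Gam mu0 Lam0 Y n of (mu, Lam) \<Rightarrow> gauss_density mu Lam)"

definition is_estimator :: "'b set \<Rightarrow> ('b \<Rightarrow> real) \<Rightarrow> ('b \<Rightarrow> real) \<Rightarrow> 'b \<Rightarrow> real" where
  "is_estimator C phi_n phi_nl z = indicator C z * (phi_nl z / phi_n z)"

end

theory Submission
  imports Defs
begin

text \<open>The estimator is \<open>g(Z)\<close> with \<open>g = 1\<^sub>C \<psi> / \<phi>\<close>, where \<open>Z\<close> has the everywhere positive density
  \<open>\<phi> = \<phi>\<^sub>n\<close> and \<open>\<psi> = \<phi>\<^sub>n\<^sub>+\<^sub>\<ell>\<close>. Hence \<open>E g(Z) = \<integral>\<^sub>C \<psi>\<close>, which is meaningful because the
  set \<open>C\<close> of convex vectors is a countable union of closed sets, and \<open>E g(Z)\<^sup>2 = \<integral>\<^sub>C \<psi>\<^sup>2 / \<phi>\<close>.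
  So everything reduces to \<open>\<integral> \<psi>\<^sup>2 / \<phi> < \<infinity>\<close>. In the Gaussian model the posterior precision
  grows by \<open>\<ell> \<Gamma>\<^sup>-\<^sup>1\<close>, which is positive definite, so \<open>\<psi>\<^sup>2 / \<phi>\<close> is dominated by a Gaussian. In the
  Student-t model the degrees of freedom grow from \<open>\<nu>\<close> to \<open>\<nu> + \<ell>\<close>, and \<open>\<psi>\<^sup>2 / \<phi>\<close> decays like
  \<open>(1 + |y|\<^sup>2) powr -(\<nu>/2 + \<ell> + r/2)\<close>, which is integrable on \<open>\<real>\<^sup>r\<close>.\<close>

section \<open>Convex vectors form a Borel set\<close>

lemma convex_on_subgradient:
  fixes f :: "'a::euclidean_space \<Rightarrow> real"
  assumes f: "convex_on UNIV f"
  shows "\<exists>s. \<forall>z. f x0 + s \<bullet> (z - x0) \<le> f z"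
proof -
  define epi where "epi = {p :: 'a \<times> real. f (fst p) < snd p}"
  have "convex epi"
    unfolding convex_alt epi_def
  proof (clarsimp)
    fix a s b t :: _ and u :: real
    assume fa: "f a < s" "f b < t" and u: "0 \<le> u" "u \<le> 1"
    have "f ((1 - u) *\<^sub>R a + u *\<^sub>R b) \<le> (1 - u) * f a + u * f b"
      using f u by (intro convex_onD) auto
    also have "\<dots> < (1 - u) * s + u * t"
    proof (cases "u = 1")
      case False
      then have "(1 - u) * f a < (1 - u) * s" using fa u by simp
      moreover have "u * f b \<le> u * t" using fa u by (intro mult_left_mono) auto
      ultimately show ?thesis by linarith
    qed (use fa in simp)
    finally show "f ((1 - u) *\<^sub>R a + u *\<^sub>R b) < (1 - u) * s + u * t" .
  qed
  moreover have "(x0, f x0 + 1) \<in> epi" by (simp add: epi_def)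
  moreover have "{(x0, f x0)} \<inter> epi = {}" by (simp add: epi_def)
  ultimately obtain w c b where wc: "(w, c) \<noteq> 0" "w \<bullet> x0 + c * f x0 \<le> b"
      and sep: "\<And>z t. f z < t \<Longrightarrow> b \<le> w \<bullet> z + c * t"
    using separating_hyperplane_sets[OF convex_singleton, of epi "(x0, f x0)"]
    by (fastforce simp: epi_def inner_Pair)
  have key: "w \<bullet> x0 + c * f x0 \<le> w \<bullet> z + c * t" if "f z < t" for z t
    using wc(2) sep[OF that] by linarith
  have "c \<ge> 0"
    using key[of x0 "f x0 + 1"] by (simp add: algebra_simps)
  moreover have "c \<noteq> 0"
  proof
    assume "c = 0"
    then have "w \<noteq> 0" using wc(1) by (simp add: zero_prod_def)
    moreover have "w \<bullet> x0 \<le> w \<bullet> (x0 - w)"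
      using key[of "x0 - w" "f (x0 - w) + 1"] \<open>c = 0\<close> by simp
    ultimately have "w \<bullet> w \<le> 0" by (simp add: inner_diff_right)
    with \<open>w \<noteq> 0\<close> show False
      by (metis inner_eq_zero_iff inner_ge_zero order_antisym)
  qed
  ultimately have "c > 0" by simp
  have "f x0 + (- (1/c) *\<^sub>R w) \<bullet> (z - x0) \<le> f z" for z
  proof -
    have "f x0 + (- (1/c) *\<^sub>R w) \<bullet> (z - x0) \<le> t" if "f z < t" for t
      using key[OF that] \<open>c > 0\<close> by (simp add: inner_diff_right field_simps)
    then show ?thesis by (metis dense not_le)
  qed
  then show ?thesis by blast
qed

lemma convex_on_Max_affine:
  fixes c :: "'i::finite \<Rightarrow> real" and s p :: "'i \<Rightarrow> 'a::real_inner"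
  shows "convex_on UNIV (\<lambda>x. Max (range (\<lambda>i. c i + s i \<bullet> (x - p i))))"
proof (rule convex_onI)
  fix t :: real and x y :: 'a
  assume t: "0 < t" "t < 1"
  let ?F = "\<lambda>x. Max (range (\<lambda>i. c i + s i \<bullet> (x - p i)))"
  have "c i + s i \<bullet> ((1 - t) *\<^sub>R x + t *\<^sub>R y - p i) \<le> (1 - t) * ?F x + t * ?F y" for i
  proof -
    have "c i + s i \<bullet> ((1 - t) *\<^sub>R x + t *\<^sub>R y - p i)
        = (1 - t) * (c i + s i \<bullet> (x - p i)) + t * (c i + s i \<bullet> (y - p i))"
      by (simp add: inner_diff_right inner_add_right algebra_simps)
    also have "\<dots> \<le> (1 - t) * ?F x + t * ?F y"
      using t by (intro add_mono mult_left_mono Max_ge) auto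
    finally show ?thesis .
  qed
  then show "?F ((1 - t) *\<^sub>R x + t *\<^sub>R y) \<le> (1 - t) * ?F x + t * ?F y"
    by (subst Max_le_iff) auto
qed auto

text \<open>\<open>S $ i\<close> is a subgradient at \<open>xs i\<close> of a convex interpolant; bounding \<open>S\<close> makes the set closed.\<close>
definition convex_vectors_bdd :: "('r::finite \<Rightarrow> real^'d) \<Rightarrow> real \<Rightarrow> (real^'r) set" where
  "convex_vectors_bdd xs R =
     {g. \<exists>S \<in> cball 0 R. \<forall>i j. g $ i + S $ i \<bullet> (xs j - xs i) \<le> g $ j}"

lemma closed_convex_vectors_bdd:
  fixes xs :: "'r::finite \<Rightarrow> real^'d"
  shows "closed (convex_vectors_bdd xs R)"
proof -
  define P where "P = {p :: ((real^'d)^'r) \<times> (real^'r). \<forall>i j. snd p $ i + fst p $ i \<bullet> (xs j - xs i) \<le> snd p $ j}"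
  have "closed P"
    unfolding P_def by (intro closed_Collect_all closed_Collect_le continuous_intros)
  then have "closed {g. \<exists>S. S \<in> cball 0 R \<and> (S, g) \<in> P}"
    by (intro closed_compact_projection compact_cball)
  moreover have "convex_vectors_bdd xs R = {g. \<exists>S. S \<in> cball 0 R \<and> (S, g) \<in> P}"
    unfolding convex_vectors_bdd_def P_def Bex_def by auto
  ultimately show ?thesis by simp
qed

lemma convex_vectors_eq_Union_bdd:
  fixes xs :: "'r::finite \<Rightarrow> real^'d"
  shows "convex_vectors xs = (\<Union>M::nat. convex_vectors_bdd xs (real M))"
proof (intro equalityI subsetI)
  fix g assume "g \<in> convex_vectors xs"
  then obtain f where f: "convex_on UNIV f" "\<And>i. f (xs i) = g $ i"
    unfolding convex_vectors_def by auto
  have "\<forall>i. \<exists>s. \<forall>z. f (xs i) + s \<bullet> (z - xs i) \<le> f z"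
    using convex_on_subgradient[OF f(1)] by blast
  then obtain s where s: "\<And>i z. f (xs i) + s i \<bullet> (z - xs i) \<le> f z"
    by metis
  have "\<forall>i j. g $ i + (\<chi> i. s i) $ i \<bullet> (xs j - xs i) \<le> g $ j"
    using s f(2) by (metis vec_lambda_beta)
  then have "g \<in> convex_vectors_bdd xs (real (nat \<lceil>norm (\<chi> i. s i)\<rceil>))"
    unfolding convex_vectors_bdd_def by (auto intro!: bexI[of _ "\<chi> i. s i"] real_nat_ceiling_ge)
  then show "g \<in> (\<Union>M. convex_vectors_bdd xs (real M))" by blast
next
  fix g assume "g \<in> (\<Union>M. convex_vectors_bdd xs (real M))"
  then obtain S :: "(real^'d)^'r" where S: "\<And>i j. g $ i + S $ i \<bullet> (xs j - xs i) \<le> g $ j"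
    unfolding convex_vectors_bdd_def by auto
  define f where "f = (\<lambda>x. Max (range (\<lambda>i. g $ i + S $ i \<bullet> (x - xs i))))"
  have "f (xs j) = g $ j" for j
    unfolding f_def
  proof (rule antisym)
    show "g $ j \<le> Max (range (\<lambda>i. g $ i + S $ i \<bullet> (xs j - xs i)))"
      by (rule Max_ge) (auto intro: image_eqI[where x=j])
  qed (use S in \<open>simp add: Max_le_iff\<close>)
  then show "g \<in> convex_vectors xs"
    unfolding convex_vectors_def f_def by (auto intro: convex_on_Max_affine)
qed

lemma sets_borel_convex_vectors: "convex_vectors xs \<in> sets borel"
  unfolding convex_vectors_eq_Union_bdd
  by (intro sets.countable_UN) (auto intro: borel_closed closed_convex_vectors_bdd)

section \<open>Importance sampling\<close>

lemma abs_le_one_plus_square: "\<bar>x::real\<bar> \<le> 1 + x\<^sup>2"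
proof -
  have "0 \<le> (\<bar>x\<bar> - 1)\<^sup>2" by simp
  then show ?thesis by (simp add: power2_diff power2_abs)
qed

text \<open>The second moment of the estimator is \<open>\<integral>\<^sub>C \<psi>\<^sup>2 / \<phi>\<close>.\<close>
lemma
  fixes Z :: "'a \<Rightarrow> 'b::euclidean_space"
  assumes "prob_space M" and Z: "distributed M lborel Z (\<lambda>y. ennreal (\<phi> y))"
    and \<phi>_pos: "\<And>y. \<phi> y > 0" and C: "C \<in> sets borel"
    and \<psi>_meas: "\<psi> \<in> borel_measurable borel" and \<psi>_nonneg: "\<And>y. \<psi> y \<ge> 0"
    and sq_ratio: "integrable lborel (\<lambda>y. (\<psi> y)\<^sup>2 / \<phi> y)"
  shows integrable_is_estimator: "integrable M (\<lambda>\<omega>. is_estimator C \<phi> \<psi> (Z \<omega>))"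
    and integral_is_estimator:
      "(\<integral>\<omega>. is_estimator C \<phi> \<psi> (Z \<omega>) \<partial>M) = measure (density lborel (\<lambda>y. ennreal (\<psi> y))) C"
    and integrable_is_estimator_square: "integrable M (\<lambda>\<omega>. (is_estimator C \<phi> \<psi> (Z \<omega>))\<^sup>2)"
proof -
  interpret prob_space M by fact
  have \<phi>_meas: "\<phi> \<in> borel_measurable lborel"
    using distributed_real_measurable[OF _ Z] \<phi>_pos by (simp add: less_imp_le)
  define g where "g = is_estimator C \<phi> \<psi>"
  have g_meas: "g \<in> borel_measurable lborel"
    unfolding g_def is_estimator_def using \<phi>_meas \<psi>_meas C by measurable
  have \<phi>_g: "\<phi> y * g y = indicator C y * \<psi> y" for y
    using \<phi>_pos[of y] by (simp add: g_def is_estimator_def indicator_def)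
  have \<phi>_g_sq: "\<phi> y * (g y)\<^sup>2 = indicator C y * ((\<psi> y)\<^sup>2 / \<phi> y)" for y
    using \<phi>_pos[of y] by (simp add: g_def is_estimator_def indicator_def power2_eq_square)
  have "integrable lborel (\<lambda>y. \<phi> y * (g y)\<^sup>2)"
    unfolding \<phi>_g_sq using integrable_real_mult_indicator[of C lborel, OF _ sq_ratio] C
    by (simp add: mult.commute)
  then show sq: "integrable M (\<lambda>\<omega>. (is_estimator C \<phi> \<psi> (Z \<omega>))\<^sup>2)"
    using distributed_integrable[OF Z, of "\<lambda>y. (g y)\<^sup>2"] g_meas \<phi>_pos
    by (simp add: less_imp_le g_def)
  show int: "integrable M (\<lambda>\<omega>. is_estimator C \<phi> \<psi> (Z \<omega>))"
  proof (rule Bochner_Integration.integrable_bound)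
    show "integrable M (\<lambda>\<omega>. 1 + (is_estimator C \<phi> \<psi> (Z \<omega>))\<^sup>2)"
      using sq by simp
    show "(\<lambda>\<omega>. is_estimator C \<phi> \<psi> (Z \<omega>)) \<in> borel_measurable M"
    proof -
      have "Z \<in> borel_measurable M" using Z by (simp add: distributed_def)
      then show ?thesis using g_meas unfolding g_def by measurable
    qed
    show "AE \<omega> in M. norm (is_estimator C \<phi> \<psi> (Z \<omega>)) \<le> norm (1 + (is_estimator C \<phi> \<psi> (Z \<omega>))\<^sup>2)"
      by (intro AE_I2) (simp add: abs_le_one_plus_square)
  qed
  have "(\<integral>\<omega>. g (Z \<omega>) \<partial>M) = (\<integral>y. \<phi> y * g y \<partial>lborel)"
    using distributed_integral[OF Z g_meas] \<phi>_pos by (simp add: less_imp_le)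
  also have "\<dots> = enn2real (\<integral>\<^sup>+ y. ennreal (indicator C y * \<psi> y) \<partial>lborel)"
    unfolding \<phi>_g using C \<psi>_meas \<psi>_nonneg by (intro integral_eq_nn_integral) auto
  also have "\<dots> = measure (density lborel (\<lambda>y. ennreal (\<psi> y))) C"
    unfolding measure_def using C \<psi>_meas
    by (simp add: emeasure_density nn_integral_set_ennreal mult.commute)
  finally show "(\<integral>\<omega>. is_estimator C \<phi> \<psi> (Z \<omega>) \<partial>M) = measure (density lborel (\<lambda>y. ennreal (\<psi> y))) C"
    by (simp add: g_def)
qed

section \<open>Quadratic forms\<close>

text \<open>Unlike \<open>pos_def_mat\<close>, no symmetry is required: positivity of the quadratic form alone
  survives inversion.\<close>
definition pos_def_form :: "real^'n^'n \<Rightarrow> bool" where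
  "pos_def_form A \<longleftrightarrow> (\<forall>x. x \<noteq> 0 \<longrightarrow> 0 < x \<bullet> (A *v x))"

definition psd_form :: "real^'n^'n \<Rightarrow> bool" where
  "psd_form A \<longleftrightarrow> (\<forall>x. 0 \<le> x \<bullet> (A *v x))"

lemma pos_def_mat_imp_pos_def_form: "pos_def_mat A \<Longrightarrow> pos_def_form A"
  unfolding pos_def_mat_def pos_def_form_def by auto

lemma pos_def_form_imp_psd_form: "pos_def_form A \<Longrightarrow> psd_form A"
  unfolding pos_def_form_def psd_form_def by (metis inner_zero_left less_eq_real_def)

lemma pos_def_form_add_psd_form: "pos_def_form A \<Longrightarrow> psd_form B \<Longrightarrow> pos_def_form (A + B)"
  unfolding pos_def_form_def psd_form_def
  by (simp add: matrix_vector_mult_add_rdistrib inner_add_right add_pos_nonneg)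

lemma pos_def_form_scaleR: "pos_def_form A \<Longrightarrow> c > 0 \<Longrightarrow> pos_def_form (c *\<^sub>R A)"
  unfolding pos_def_form_def by (simp flip: scaleR_matrix_vector_assoc)

lemma psd_form_scaleR: "psd_form A \<Longrightarrow> c \<ge> 0 \<Longrightarrow> psd_form (c *\<^sub>R A)"
  unfolding psd_form_def by (simp flip: scaleR_matrix_vector_assoc)

lemma psd_form_outer_prod:
  fixes v :: "real^'n"
  shows "psd_form (outer_prod v v)"
proof -
  have "x \<bullet> (outer_prod v v *v x) = (v \<bullet> x)\<^sup>2" for x :: "real^'n"
    by (simp add: outer_prod_def matrix_vector_mult_def inner_vec_def power2_eq_square
                  sum_distrib_left sum_distrib_right algebra_simps)
  then show ?thesis unfolding psd_form_def by simp
qed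

lemma invertible_if_pos_def_form:
  fixes A :: "real^'n^'n"
  assumes "pos_def_form A"
  shows "invertible A"
proof -
  have "\<forall>x. A *v x = 0 \<longrightarrow> x = 0"
    using assms unfolding pos_def_form_def by (metis inner_zero_right less_irrefl)
  then show ?thesis
    unfolding invertible_left_inverse matrix_left_invertible_ker .
qed

lemma
  fixes A :: "'a::semiring_1^'n^'m"
  assumes "invertible A"
  shows matrix_mul_matrix_inv: "A ** matrix_inv A = mat 1"
    and matrix_inv_matrix_mul: "matrix_inv A ** A = mat 1"
  using someI_ex[OF assms[unfolded invertible_def]] unfolding matrix_inv_def by auto

lemma matrix_inv_matrix_inv:
  fixes A :: "'a::semiring_1^'n^'m"
  assumes "invertible A"
  shows "matrix_inv (matrix_inv A) = A"
proof -
  have "invertible (matrix_inv A)"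
    using matrix_mul_matrix_inv[OF assms] matrix_inv_matrix_mul[OF assms]
    unfolding invertible_def by blast
  then have "matrix_inv (matrix_inv A) = matrix_inv (matrix_inv A) ** (matrix_inv A ** A)"
    and "matrix_inv (matrix_inv A) ** matrix_inv A = mat 1"
    by (simp_all add: matrix_inv_matrix_mul[OF assms] matrix_inv_matrix_mul)
  then show ?thesis by (simp add: matrix_mul_assoc)
qed

lemma pos_def_form_matrix_inv:
  fixes A :: "real^'n^'n"
  assumes A: "pos_def_form A"
  shows "pos_def_form (matrix_inv A)"
  unfolding pos_def_form_def
proof (intro allI impI)
  fix x :: "real^'n" assume "x \<noteq> 0"
  define w where "w = matrix_inv A *v x"
  have Aw: "A *v w = x"
    unfolding w_def matrix_vector_mul_assoc
    by (simp add: matrix_mul_matrix_inv[OF invertible_if_pos_def_form[OF A]])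
  with \<open>x \<noteq> 0\<close> have "w \<noteq> 0" by auto
  then have "0 < w \<bullet> (A *v w)"
    using A unfolding pos_def_form_def by blast
  moreover have "x \<bullet> (matrix_inv A *v x) = (A *v w) \<bullet> w"
    using Aw w_def by simp
  ultimately show "0 < x \<bullet> (matrix_inv A *v x)"
    by (simp add: inner_commute)
qed

lemma pos_def_form_lower_bound:
  fixes A :: "real^'n^'n"
  assumes "pos_def_form A"
  obtains \<delta> where "\<delta> > 0" "\<And>x. \<delta> * (norm x)\<^sup>2 \<le> x \<bullet> (A *v x)"
proof -
  obtain u where u: "norm u = 1" "\<And>y. norm y = 1 \<Longrightarrow> u \<bullet> (A *v u) \<le> y \<bullet> (A *v y)"
    using continuous_attains_inf[OF compact_sphere, of 0 1 "\<lambda>y. y \<bullet> (A *v y)"]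
    by (fastforce intro: continuous_intros)
  have "u \<bullet> (A *v u) * (norm x)\<^sup>2 \<le> x \<bullet> (A *v x)" for x
  proof (cases "x = 0")
    case False
    define y where "y = (1 / norm x) *\<^sub>R x"
    have y: "norm y = 1" using False by (simp add: y_def)
    have "x \<bullet> (A *v x) = (norm x)\<^sup>2 * (y \<bullet> (A *v y))"
      using False by (simp add: y_def matrix_vector_mult_scaleR power2_eq_square)
    then show ?thesis
      using mult_right_mono[OF u(2)[OF y], of "(norm x)\<^sup>2"] by (simp add: mult.commute)
  qed simp
  moreover have "u \<noteq> 0" using u(1) by auto
  then have "u \<bullet> (A *v u) > 0"
    using assms unfolding pos_def_form_def by blast
  ultimately show ?thesis using that by blast
qed

lemma quad_form_upper_bound:
  fixes A :: "real^'n^'n"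
  obtains K where "K > 0" "\<And>x. \<bar>x \<bullet> (A *v x)\<bar> \<le> K * (norm x)\<^sup>2"
proof -
  obtain K where K: "K > 0" "\<And>x. norm (A *v x) \<le> norm x * K"
    using bounded_linear.pos_bounded[OF matrix_vector_mul_bounded_linear[of A]] by blast
  have "\<bar>x \<bullet> (A *v x)\<bar> \<le> K * (norm x)\<^sup>2" for x
  proof -
    have "\<bar>x \<bullet> (A *v x)\<bar> \<le> norm x * norm (A *v x)" by (rule Cauchy_Schwarz_ineq2)
    also have "\<dots> \<le> norm x * (norm x * K)" by (intro mult_left_mono K(2)) auto
    finally show ?thesis by (simp add: power2_eq_square mult_ac)
  qed
  with K(1) show ?thesis using that by blast
qed

section \<open>Integrability of decaying functions on Euclidean space\<close>

lemma integrable_powr_atLeast_1: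
  fixes e :: real
  assumes "e < -1"
  shows "integrable lborel (\<lambda>t. indicator {1..} t * t powr e)"
proof -
  have "(\<lambda>t. t powr e) integrable_on {1..}"
    using has_integral_powr_to_inf[OF assms] by (rule has_integral_integrable) simp
  then have "integrable lebesgue (\<lambda>t. indicator {1..} t * t powr e)"
    using nonnegative_absolutely_integrable_1[of "\<lambda>t. t powr e" "{1..}"]
    by (simp add: set_integrable_def)
  then show ?thesis
    using integrable_completion[of "\<lambda>t. indicator {1..} t * t powr e" lborel] by simp
qed

lemma one_plus_square_powr_le:
  fixes a t :: real
  assumes "a \<ge> 0" "\<bar>t\<bar> \<ge> 1"
  shows "(1 + t\<^sup>2) powr (- a) \<le> \<bar>t\<bar> powr (- 2 * a)"
proof -
  have t: "t\<^sup>2 = \<bar>t\<bar> powr 2"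
    using assms powr_realpow[of "\<bar>t\<bar>" 2] by simp
  have "(1 + t\<^sup>2) powr (- a) \<le> (t\<^sup>2) powr (- a)"
    using assms by (intro powr_mono2') auto
  also have "\<dots> = \<bar>t\<bar> powr (- 2 * a)"
    unfolding t by (simp only: powr_powr) simp
  finally show ?thesis .
qed

lemma integrable_one_plus_square_powr:
  fixes a :: real
  assumes a: "a > 1/2"
  shows "integrable lborel (\<lambda>t::real. (1 + t\<^sup>2) powr (- a))"
proof (rule Bochner_Integration.integrable_bound)
  define k where "k = (\<lambda>t::real. indicator {1..} t * t powr (- 2 * a))"
  have "integrable lborel k"
    unfolding k_def using a by (intro integrable_powr_atLeast_1) auto
  then show "integrable lborel (\<lambda>t. indicator {-1..1} t + k t + k (- t))"
    using lborel_integrable_real_affine_iff[of "-1" k 0]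
    by (intro Bochner_Integration.integrable_add integrable_real_indicator) auto
  show "AE t in lborel. norm ((1 + t\<^sup>2) powr (- a)) \<le> norm (indicator {-1..1} t + k t + k (- t))"
  proof (rule AE_I2)
    fix t :: real
    have k_nonneg: "0 \<le> k t" for t by (simp add: k_def)
    have "(1 + t\<^sup>2) powr (- a) \<le> indicator {-1..1} t + k t + k (- t)"
    proof (cases "\<bar>t\<bar> \<le> 1")
      case True
      then have "(1 + t\<^sup>2) powr (- a) \<le> indicator {-1..1} t"
        using a powr_mono2'[of "-a" 1 "1 + t\<^sup>2"] by (auto simp: abs_le_iff)
      then show ?thesis using k_nonneg[of t] k_nonneg[of "- t"] by linarith
    next
      case False
      then have "(1 + t\<^sup>2) powr (- a) \<le> \<bar>t\<bar> powr (- 2 * a)"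
        using a by (intro one_plus_square_powr_le) auto
      then show ?thesis
        using False by (cases "t \<ge> 0") (auto simp: k_def)
    qed
    then show "norm ((1 + t\<^sup>2) powr (- a)) \<le> norm (indicator {-1..1} t + k t + k (- t))"
      by simp
  qed
qed simp

lemma integrable_exp_neg_square:
  fixes c :: real
  assumes "c > 0"
  shows "integrable lborel (\<lambda>t::real. exp (- c * t\<^sup>2))"
proof -
  define \<sigma> where "\<sigma> = sqrt (1 / (2 * c))"
  have "exp (- c * t\<^sup>2) = sqrt (pi / c) * normal_density 0 \<sigma> t" for t
    using assms by (simp add: normal_density_def \<sigma>_def real_sqrt_divide field_simps)
  moreover have "\<sigma> > 0" using assms by (simp add: \<sigma>_def)
  then have "integrable lborel (\<lambda>t. sqrt (pi / c) * normal_density 0 \<sigma> t)"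
    by simp
  ultimately show ?thesis by simp
qed

lemma integrable_prod_Basis:
  fixes g :: "real \<Rightarrow> real"
  assumes g: "integrable lborel g" and g_nonneg: "\<And>t. 0 \<le> g t"
  shows "integrable (lborel :: 'a::euclidean_space measure) (\<lambda>y. \<Prod>b\<in>Basis. g (y \<bullet> b))"
proof (rule integrableI_nonneg)
  have [measurable]: "g \<in> borel_measurable borel" using g by simp
  show "(\<lambda>y::'a. \<Prod>b\<in>Basis. g (y \<bullet> b)) \<in> borel_measurable lborel" by measurable
  show "AE y in lborel. 0 \<le> (\<Prod>b\<in>Basis. g (y \<bullet> b))" by (auto intro: prod_nonneg g_nonneg)
  have "(\<integral>\<^sup>+y. ennreal (\<Prod>b\<in>Basis. g (y \<bullet> b)) \<partial>(lborel::'a measure))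
      = (\<integral>\<^sup>+y. (\<Prod>b\<in>Basis. ennreal (g (y \<bullet> b))) \<partial>(lborel::'a measure))"
    by (simp add: prod_ennreal g_nonneg)
  also have "\<dots> = (\<Prod>b\<in>(Basis::'a set). \<integral>\<^sup>+t. ennreal (g t) \<partial>lborel)"
    by (rule nn_integral_lborel_prod) auto
  also have "\<dots> < \<infinity>"
    using g by (simp add: integrable_iff_bounded g_nonneg less_top[symmetric] power_eq_top_ennreal_iff)
  finally show "(\<integral>\<^sup>+y. ennreal (\<Prod>b\<in>Basis. g (y \<bullet> b)) \<partial>(lborel::'a measure)) < \<infinity>" .
qed

text \<open>Dominate by \<open>\<Prod>\<^sub>b (1 + (y \<bullet> b)\<^sup>2) powr (-s/n)\<close>, a product of integrable one-dimensional factors.\<close>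
lemma integrable_one_plus_norm_square_powr:
  fixes s :: real
  assumes s: "s > real DIM('a) / 2"
  shows "integrable (lborel :: 'a::euclidean_space measure) (\<lambda>y. (1 + (norm y)\<^sup>2) powr (- s))"
proof (rule Bochner_Integration.integrable_bound)
  define a where "a = s / DIM('a)"
  have "a > 1/2" using s by (simp add: a_def field_simps)
  then show "integrable (lborel :: 'a measure) (\<lambda>y. \<Prod>b\<in>Basis. (1 + (y \<bullet> b)\<^sup>2) powr (- a))"
    by (intro integrable_prod_Basis integrable_one_plus_square_powr) auto
  show "AE y in (lborel::'a measure). norm ((1 + (norm y)\<^sup>2) powr (- s)) \<le> norm (\<Prod>b\<in>Basis. (1 + (y \<bullet> b)\<^sup>2) powr (- a))"
  proof (rule AE_I2)
    fix y :: 'a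
    have "(1 + (norm y)\<^sup>2) powr (- s) = ((1 + (norm y)\<^sup>2) powr (- a)) powr DIM('a)"
      by (simp add: a_def powr_powr)
    also have "\<dots> = (\<Prod>b\<in>(Basis::'a set). (1 + (norm y)\<^sup>2) powr (- a))"
    proof -
      have "1 + (norm y)\<^sup>2 > 0" by (simp add: add_pos_nonneg)
      then show ?thesis by (simp add: powr_realpow)
    qed
    also have "\<dots> \<le> (\<Prod>b\<in>Basis. (1 + (y \<bullet> b)\<^sup>2) powr (- a))"
    proof (rule prod_mono)
      fix b :: 'a assume "b \<in> Basis"
      then have "(y \<bullet> b)\<^sup>2 \<le> (norm y)\<^sup>2"
        using Basis_le_norm[of b y] power_mono[of "\<bar>y \<bullet> b\<bar>" "norm y" 2] by simp
      then show "0 \<le> (1 + (norm y)\<^sup>2) powr (- a) \<and> (1 + (norm y)\<^sup>2) powr (- a) \<le> (1 + (y \<bullet> b)\<^sup>2) powr (- a)"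
        using \<open>a > 1/2\<close> by (auto intro!: powr_mono2' add_pos_nonneg)
    qed
    finally show "norm ((1 + (norm y)\<^sup>2) powr (- s)) \<le> norm (\<Prod>b\<in>Basis. (1 + (y \<bullet> b)\<^sup>2) powr (- a))"
      by (simp add: prod_nonneg)
  qed
qed simp

lemma integrable_exp_neg_norm_square:
  fixes c :: real
  assumes "c > 0"
  shows "integrable (lborel :: 'a::euclidean_space measure) (\<lambda>y. exp (- c * (norm y)\<^sup>2))"
proof -
  have "exp (- c * (norm y)\<^sup>2) = (\<Prod>b\<in>Basis. exp (- c * (y \<bullet> b)\<^sup>2))" for y :: 'a
  proof -
    have "(norm y)\<^sup>2 = (\<Sum>b\<in>Basis. (y \<bullet> b)\<^sup>2)"
      using euclidean_inner[of y y] by (simp add: power2_eq_square flip: power2_norm_eq_inner)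
    then show ?thesis by (simp add: exp_sum[symmetric] sum_distrib_left)
  qed
  then show ?thesis
    using integrable_prod_Basis[OF integrable_exp_neg_square[OF assms]] by simp
qed

lemma borel_measurable_matrix_vector_mult [measurable]:
  "f \<in> borel_measurable M \<Longrightarrow> (\<lambda>x. (A::real^'n^'m) *v f x) \<in> borel_measurable M"
  using borel_measurable_continuous_onI[OF matrix_vector_mult_linear_continuous_on[of UNIV A]]
  by (rule measurable_compose[rotated])

lemma power2_norm_le_diff:
  fixes y m :: "'a::real_normed_vector"
  shows "(norm y)\<^sup>2 \<le> 2 * (norm (y - m))\<^sup>2 + 2 * (norm m)\<^sup>2"
proof -
  have "norm y \<le> norm (y - m) + norm m" using norm_triangle_ineq[of "y - m" m] by simp
  then have "(norm y)\<^sup>2 \<le> (norm (y - m) + norm m)\<^sup>2" by (simp add: power_mono)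
  also have "\<dots> \<le> 2 * (norm (y - m))\<^sup>2 + 2 * (norm m)\<^sup>2"
    using zero_le_power2[of "norm (y - m) - norm m"] by (simp only: power2_sum power2_diff)
  finally show ?thesis .
qed

lemma psd_form_half_quad_le:
  fixes A :: "real^'n^'n"
  assumes "psd_form A"
  shows "(u + b) \<bullet> (A *v (u + b)) / 2 - u \<bullet> (A *v u) \<le> b \<bullet> (A *v b)"
proof -
  have "0 \<le> (u - b) \<bullet> (A *v (u - b))" using assms unfolding psd_form_def by simp
  then show ?thesis
    by (simp add: matrix_vector_right_distrib matrix_vector_mult_diff_distrib inner_add_left
          inner_add_right inner_diff_left inner_diff_right algebra_simps)
qed

lemma integrable_exp_quad_form_ratio:
  fixes A B :: "real^'n^'n" and m m' :: "real^'n"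
  assumes A: "psd_form A" and B: "pos_def_form B"
  shows "integrable lborel
           (\<lambda>y. exp ((y - m) \<bullet> (A *v (y - m)) / 2 - (y - m') \<bullet> ((A + B) *v (y - m'))))"
proof -
  obtain \<delta> where \<delta>: "\<delta> > 0" "\<And>x. \<delta> * (norm x)\<^sup>2 \<le> x \<bullet> (B *v x)"
    using pos_def_form_lower_bound[OF B] by blast
  define c where "c = (m' - m) \<bullet> (A *v (m' - m)) + \<delta> * (norm m')\<^sup>2"
  show ?thesis
  proof (rule Bochner_Integration.integrable_bound)
    show "integrable lborel (\<lambda>y::real^'n. exp c * exp (- (\<delta> / 2) * (norm y)\<^sup>2))"
      using \<delta>(1) by (intro integrable_mult_right integrable_exp_neg_norm_square) simp
    show "AE y in lborel. norm (exp ((y - m) \<bullet> (A *v (y - m)) / 2 - (y - m') \<bullet> ((A + B) *v (y - m'))))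
        \<le> norm (exp c * exp (- (\<delta> / 2) * (norm y)\<^sup>2))"
    proof (rule AE_I2)
      fix y :: "real^'n"
      have "(y - m) \<bullet> (A *v (y - m)) / 2 - (y - m') \<bullet> ((A + B) *v (y - m'))
          = ((y - m') + (m' - m)) \<bullet> (A *v ((y - m') + (m' - m))) / 2 - (y - m') \<bullet> (A *v (y - m'))
            - (y - m') \<bullet> (B *v (y - m'))"
        by (simp add: matrix_vector_mult_add_rdistrib inner_add_right)
      also have "\<dots> \<le> (m' - m) \<bullet> (A *v (m' - m)) - \<delta> * (norm (y - m'))\<^sup>2"
        using psd_form_half_quad_le[OF A, of "y - m'" "m' - m"] \<delta>(2)[of "y - m'"] by linarith
      also have "\<dots> \<le> c - \<delta> / 2 * (norm y)\<^sup>2"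
        using mult_left_mono[OF power2_norm_le_diff[of y m'], of "\<delta> / 2"] \<delta>(1)
        by (simp add: c_def algebra_simps)
      finally show "norm (exp ((y - m) \<bullet> (A *v (y - m)) / 2 - (y - m') \<bullet> ((A + B) *v (y - m'))))
          \<le> norm (exp c * exp (- (\<delta> / 2) * (norm y)\<^sup>2))"
        by (simp add: exp_add[symmetric])
    qed
  qed measurable
qed

lemma one_plus_quad_form_le:
  fixes A :: "real^'n^'n" and m :: "real^'n"
  obtains K where "K > 0" "\<And>y. 1 + (y - m) \<bullet> (A *v (y - m)) \<le> K * (1 + (norm y)\<^sup>2)"
proof -
  obtain K0 where K0: "K0 > 0" "\<And>x. \<bar>x \<bullet> (A *v x)\<bar> \<le> K0 * (norm x)\<^sup>2"
    using quad_form_upper_bound by blast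
  define K where "K = 1 + 2 * K0 + 2 * K0 * (norm m)\<^sup>2"
  have "1 + (y - m) \<bullet> (A *v (y - m)) \<le> K * (1 + (norm y)\<^sup>2)" for y
  proof -
    have "(norm (y - m))\<^sup>2 \<le> 2 * (norm y)\<^sup>2 + 2 * (norm m)\<^sup>2"
      using power2_norm_le_diff[of "y - m" "- m"] by simp
    then have "K0 * (norm (y - m))\<^sup>2 \<le> K0 * (2 * (norm y)\<^sup>2 + 2 * (norm m)\<^sup>2)"
      using K0(1) by (intro mult_left_mono) auto
    then have "(y - m) \<bullet> (A *v (y - m)) \<le> K0 * (2 * (norm y)\<^sup>2 + 2 * (norm m)\<^sup>2)"
      using K0(2)[of "y - m"] by linarith
    moreover have "K * (1 + (norm y)\<^sup>2) = 1 + 2 * K0 * (norm m)\<^sup>2 + 2 * K0 * (norm y)\<^sup>2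
        + (2 * K0 + (norm y)\<^sup>2 + 2 * K0 * (norm m)\<^sup>2 * (norm y)\<^sup>2)"
      by (simp add: K_def algebra_simps)
    moreover have "0 \<le> 2 * K0 + (norm y)\<^sup>2 + 2 * K0 * (norm m)\<^sup>2 * (norm y)\<^sup>2"
      using K0(1) by simp
    ultimately show ?thesis by (simp add: algebra_simps del: inner_diff_left inner_diff_right)
  qed
  moreover have "K > 0" using K0(1) by (simp add: K_def add_pos_nonneg)
  ultimately show ?thesis using that by blast
qed

lemma one_plus_norm_le_pos_def_form:
  fixes A :: "real^'n^'n" and m :: "real^'n"
  assumes "pos_def_form A"
  obtains c where "c > 0" "\<And>y. 1 + (norm y)\<^sup>2 \<le> c * (1 + (y - m) \<bullet> (A *v (y - m)))"
proof -
  obtain \<delta> where \<delta>: "\<delta> > 0" "\<And>x. \<delta> * (norm x)\<^sup>2 \<le> x \<bullet> (A *v x)"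
    using pos_def_form_lower_bound[OF assms] by blast
  define c where "c = max (1 + 2 * (norm m)\<^sup>2) (2 / \<delta>)"
  have "c > 0" by (simp add: c_def add_pos_nonneg max.strict_coboundedI1)
  have "1 + (norm y)\<^sup>2 \<le> c * (1 + (y - m) \<bullet> (A *v (y - m)))" for y
  proof -
    have "1 + (norm y)\<^sup>2 \<le> (1 + 2 * (norm m)\<^sup>2) + (2 / \<delta>) * (\<delta> * (norm (y - m))\<^sup>2)"
      using power2_norm_le_diff[of y m] \<delta>(1) by simp
    also have "\<dots> \<le> c + c * (\<delta> * (norm (y - m))\<^sup>2)"
      unfolding c_def using \<delta>(1) by (intro add_mono mult_right_mono) auto
    also have "\<dots> \<le> c * (1 + (y - m) \<bullet> (A *v (y - m)))"
      using mult_left_mono[OF \<delta>(2)[of "y - m"], of c] \<open>c > 0\<close> by (simp add: distrib_left)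
    finally show ?thesis .
  qed
  with \<open>c > 0\<close> show ?thesis using that by blast
qed

lemma integrable_one_plus_quad_form_powr_ratio:
  fixes A A' :: "real^'n^'n" and m m' :: "real^'n"
  assumes A: "psd_form A" and A': "pos_def_form A'"
    and e: "e \<ge> 0" "e' \<ge> 0" and decay: "2 * e' - e > real CARD('n) / 2"
  shows "integrable lborel (\<lambda>y. (1 + (y - m') \<bullet> (A' *v (y - m'))) powr (- 2 * e')
                                * (1 + (y - m) \<bullet> (A *v (y - m))) powr e)"
proof -
  obtain K where K: "K > 0" "\<And>y. 1 + (y - m) \<bullet> (A *v (y - m)) \<le> K * (1 + (norm y)\<^sup>2)"
    using one_plus_quad_form_le by blast
  obtain c where c: "c > 0" "\<And>y. 1 + (norm y)\<^sup>2 \<le> c * (1 + (y - m') \<bullet> (A' *v (y - m')))"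
    using one_plus_norm_le_pos_def_form[OF A'] by blast
  show ?thesis
  proof (rule Bochner_Integration.integrable_bound)
    show "integrable lborel (\<lambda>y::real^'n. c powr (2 * e') * K powr e * (1 + (norm y)\<^sup>2) powr (- (2 * e' - e)))"
      using decay by (intro integrable_mult_right integrable_one_plus_norm_square_powr) simp
    show "AE y in lborel. norm ((1 + (y - m') \<bullet> (A' *v (y - m'))) powr (- 2 * e')
                                * (1 + (y - m) \<bullet> (A *v (y - m))) powr e)
        \<le> norm (c powr (2 * e') * K powr e * (1 + (norm y)\<^sup>2) powr (- (2 * e' - e)))"
    proof (rule AE_I2)
      fix y :: "real^'n"
      define W where "W = 1 + (norm y)\<^sup>2"
      have W: "W > 0" by (simp add: W_def add_pos_nonneg)
      have Q: "0 \<le> (y - m) \<bullet> (A *v (y - m))" using A unfolding psd_form_def by simp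
      have "(1 + (y - m') \<bullet> (A' *v (y - m'))) powr (- 2 * e') \<le> (W / c) powr (- 2 * e')"
        using c e W by (intro powr_mono2') (auto simp: W_def field_simps)
      moreover have "(1 + (y - m) \<bullet> (A *v (y - m))) powr e \<le> (K * W) powr e"
        using K(2)[of y] Q e by (intro powr_mono2) (auto simp: W_def)
      ultimately have "(1 + (y - m') \<bullet> (A' *v (y - m'))) powr (- 2 * e')
                         * (1 + (y - m) \<bullet> (A *v (y - m))) powr e
                       \<le> (W / c) powr (- 2 * e') * (K * W) powr e"
        by (intro mult_mono) auto
      also have "\<dots> = c powr (2 * e') * K powr e * W powr (- (2 * e' - e))"
        using c(1) K(1) W by (simp add: powr_divide powr_mult powr_minus_divide powr_diff powr_add
            field_simps)
      finally show "norm ((1 + (y - m') \<bullet> (A' *v (y - m'))) powr (- 2 * e')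
                          * (1 + (y - m) \<bullet> (A *v (y - m))) powr e)
          \<le> norm (c powr (2 * e') * K powr e * (1 + (norm y)\<^sup>2) powr (- (2 * e' - e)))"
        by (simp add: W_def)
    qed
  qed measurable
qed

section \<open>Gaussian and Student-t densities\<close>

lemma gauss_density_nonneg: "gauss_density mu Sig y \<ge> 0"
  by (simp add: gauss_density_def)

lemma borel_measurable_gauss_density [measurable]: "gauss_density mu Sig \<in> borel_measurable borel"
  unfolding gauss_density_def[abs_def] by measurable

lemma distributed_density_factor_pos:
  fixes Z :: "'a \<Rightarrow> 'b::euclidean_space"
  assumes "prob_space M" and "distributed M lborel Z (\<lambda>y. ennreal (K * h y))"
    and h_pos: "\<And>y. h y > 0"
  shows "K > 0"
proof (rule ccontr)
  assume "\<not> K > 0"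
  then have "(\<lambda>y. ennreal (K * h y)) = (\<lambda>y. 0)"
    using h_pos by (auto simp: fun_eq_iff ennreal_eq_0_iff mult_nonpos_nonneg less_imp_le)
  then have "distr M lborel Z = density lborel (\<lambda>y::'b. 0)"
    using assms(2) by (simp add: distributed_def)
  moreover have "prob_space (distr M lborel Z)"
    using assms(1,2) by (intro prob_space.prob_space_distr) (auto simp: distributed_def)
  ultimately show False
    using prob_space.emeasure_space_1[of "density lborel (\<lambda>y::'b. 0)"] by (simp add: emeasure_density)
qed

text \<open>Positivity of the normalising constants (e.g. \<open>det \<Sigma> > 0\<close>) is never proved directly: it
  follows from the density integrating to one.\<close>
lemma distributed_gauss_density_pos:
  fixes mu :: "real^'n::finite"
  assumes "prob_space M" and "distributed M lborel Z (gauss_density mu Sig)"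
  shows "gauss_density mu Sig y > 0"
proof -
  have "(2 * pi) powr (- real CARD('n) / 2) * det Sig powr (-1/2) > 0"
    using assms(2) unfolding gauss_density_def
    by (rule distributed_density_factor_pos[OF assms(1)]) simp
  then show ?thesis by (simp add: gauss_density_def)
qed

lemma square_divide_exp: "(c * exp a)\<^sup>2 / (d * exp b) = c\<^sup>2 / d * exp (2 * a - b)"
  for a b c d :: real
  by (simp add: power_mult_distrib power2_eq_square exp_diff exp_add[symmetric])

lemma integrable_gauss_density_sq_ratio:
  fixes mu mu' :: "real^'n"
  assumes "psd_form (matrix_inv Sig)" and "matrix_inv Sig' = matrix_inv Sig + B" and "pos_def_form B"
  shows "integrable lborel (\<lambda>y. (gauss_density mu' Sig' y)\<^sup>2 / gauss_density mu Sig y)"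
proof -
  let ?K = "\<lambda>S::real^'n^'n. (2 * pi) powr (- real CARD('n) / 2) * det S powr (-1/2)"
  have "(gauss_density mu' Sig' y)\<^sup>2 / gauss_density mu Sig y
      = (?K Sig')\<^sup>2 / ?K Sig * exp ((y - mu) \<bullet> (matrix_inv Sig *v (y - mu)) / 2
                                  - (y - mu') \<bullet> ((matrix_inv Sig + B) *v (y - mu')))" for y
    unfolding gauss_density_def square_divide_exp assms(2)[symmetric] by simp
  then show ?thesis
    using integrable_exp_quad_form_ratio[OF assms(1,3)] by (simp add: integrable_mult_right)
qed

lemma student_t_density_nonneg:
  assumes "nu > 0"
  shows "student_t_density nu mu Sig y \<ge> 0"
  using assms by (simp add: student_t_density_def add_pos_nonneg less_imp_le)

lemma borel_measurable_student_t_density [measurable]: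
  "student_t_density nu mu Sig \<in> borel_measurable borel"
  unfolding student_t_density_def[abs_def] by measurable

lemma student_t_density_eq_quad_form:
  "student_t_density nu mu Sig y =
     Gamma ((nu + real CARD('n)) / 2)
       / (Gamma (nu / 2) * (nu * pi) powr (real CARD('n) / 2) * det Sig powr (1/2))
     * (1 + (y - mu) \<bullet> (((1 / nu) *\<^sub>R matrix_inv Sig) *v (y - mu))) powr (- (nu + real CARD('n)) / 2)"
  for mu :: "real^'n::finite"
  by (simp add: student_t_density_def flip: scaleR_matrix_vector_assoc)

lemma distributed_student_t_density_pos:
  fixes mu :: "real^'n::finite"
  assumes "prob_space M" and "distributed M lborel Z (student_t_density nu mu Sig)"
    and "nu > 0" and "psd_form (matrix_inv Sig)"
  shows "student_t_density nu mu Sig y > 0"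
proof -
  have base: "1 + (y - mu) \<bullet> (((1 / nu) *\<^sub>R matrix_inv Sig) *v (y - mu)) \<noteq> 0" for y
  proof -
    have "0 \<le> (y - mu) \<bullet> (((1 / nu) *\<^sub>R matrix_inv Sig) *v (y - mu))"
      using psd_form_scaleR[OF assms(4), of "1 / nu"] assms(3) unfolding psd_form_def by simp
    then show ?thesis by linarith
  qed
  have "Gamma ((nu + real CARD('n)) / 2)
          / (Gamma (nu / 2) * (nu * pi) powr (real CARD('n) / 2) * det Sig powr (1/2)) > 0"
    using assms(2) unfolding student_t_density_eq_quad_form
    by (rule distributed_density_factor_pos[OF assms(1)]) (simp add: base)
  then show ?thesis
    unfolding student_t_density_eq_quad_form using base[of y] by (intro mult_pos_pos) auto
qed

lemma square_divide_powr: "(c * x powr (- a))\<^sup>2 / (d * y powr (- b)) = c\<^sup>2 / d * (x powr (- 2 * a) * y powr b)"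
  for a b c d x y :: real
proof -
  have "(x powr (- a))\<^sup>2 = x powr (- 2 * a)"
    by (simp add: power2_eq_square flip: powr_add)
  moreover have "1 / y powr (- b) = y powr b" by (simp add: powr_minus_divide)
  ultimately show ?thesis
    by (metis (no_types, lifting) power_mult_distrib times_divide_times_eq times_divide_eq_right mult_1_right)
qed

lemma integrable_student_t_density_sq_ratio:
  fixes mu mu' :: "real^'n::finite"
  assumes nu: "nu > 0" "2 * nu' > nu"
    and Sig: "psd_form (matrix_inv Sig)" and Sig': "pos_def_form (matrix_inv Sig')"
  shows "integrable lborel (\<lambda>y. (student_t_density nu' mu' Sig' y)\<^sup>2 / student_t_density nu mu Sig y)"
proof -
  define r where "r = real CARD('n)"
  define A where "A = (1 / nu) *\<^sub>R matrix_inv Sig"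
  define A' where "A' = (1 / nu') *\<^sub>R matrix_inv Sig'"
  have A: "psd_form A" unfolding A_def using Sig nu by (intro psd_form_scaleR) auto
  have A': "pos_def_form A'" unfolding A'_def using Sig' nu by (intro pos_def_form_scaleR) auto
  define K where "K = (\<lambda>nu (S::real^'n^'n). Gamma ((nu + r) / 2) / (Gamma (nu / 2) * (nu * pi) powr (r / 2) * det S powr (1/2)))"
  define h where "h = (\<lambda>y. 1 + (y - mu) \<bullet> (A *v (y - mu)))"
  define h' where "h' = (\<lambda>y. 1 + (y - mu') \<bullet> (A' *v (y - mu')))"
  have "(student_t_density nu' mu' Sig' y)\<^sup>2 / student_t_density nu mu Sig y
      = (K nu' Sig')\<^sup>2 / K nu Sig * (h' y powr (- 2 * ((nu' + r) / 2)) * h y powr ((nu + r) / 2))" for y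
    unfolding student_t_density_eq_quad_form minus_divide_left[symmetric] square_divide_powr
    by (simp only: K_def h_def h'_def A_def A'_def r_def)
  moreover have "integrable lborel (\<lambda>y. h' y powr (- 2 * ((nu' + r) / 2)) * h y powr ((nu + r) / 2))"
    unfolding h_def h'_def using A A' nu
    by (intro integrable_one_plus_quad_form_powr_ratio) (auto simp: r_def field_simps)
  ultimately show ?thesis by (simp add: integrable_mult_right)
qed

section \<open>The two posterior models\<close>

lemma known_post_density_eq:
  "known_post_density Gam mu0 Lam0 Y n =
     gauss_density (fst (known_post Gam mu0 Lam0 Y n)) (snd (known_post Gam mu0 Lam0 Y n))"
  by (simp add: known_post_density_def split_beta)

lemma snd_known_post_Suc:
  "snd (known_post Gam mu0 Lam0 Y (Suc k)) =
     matrix_inv (matrix_inv (snd (known_post Gam mu0 Lam0 Y k)) + matrix_inv Gam)"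
  by (simp add: split_beta Let_def)

lemma pos_def_form_snd_known_post:
  assumes "pos_def_form Gam" and "pos_def_form Lam0"
  shows "pos_def_form (snd (known_post Gam mu0 Lam0 Y k))"
proof (induction k)
  case (Suc k)
  then show ?case unfolding snd_known_post_Suc
    by (intro pos_def_form_matrix_inv pos_def_form_add_psd_form pos_def_form_imp_psd_form assms)
qed (simp add: assms)

lemma known_post_precision_add:
  assumes "pos_def_form Gam" and "pos_def_form Lam0"
  shows "matrix_inv (snd (known_post Gam mu0 Lam0 Y (n + l))) =
         matrix_inv (snd (known_post Gam mu0 Lam0 Y n)) + real l *\<^sub>R matrix_inv Gam"
proof (induction l)
  case (Suc l)
  have "matrix_inv (snd (known_post Gam mu0 Lam0 Y (Suc (n + l)))) =
        matrix_inv (snd (known_post Gam mu0 Lam0 Y (n + l))) + matrix_inv Gam"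
    unfolding snd_known_post_Suc
    by (intro matrix_inv_matrix_inv invertible_if_pos_def_form pos_def_form_add_psd_form
        pos_def_form_matrix_inv pos_def_form_imp_psd_form pos_def_form_snd_known_post assms)
  with Suc show ?case by (simp add: algebra_simps)
qed simp

lemma known_post_density_pos:
  assumes "prob_space M" and "distributed M lborel Z (known_post_density Gam mu0 Lam0 Y n)"
  shows "known_post_density Gam mu0 Lam0 Y n y > 0"
  using distributed_gauss_density_pos assms unfolding known_post_density_eq by blast

lemma integrable_known_post_density_sq_ratio:
  assumes "pos_def_mat Gam" and "pos_def_mat Lam0" and "l \<ge> 1"
  shows "integrable lborel (\<lambda>y. (known_post_density Gam mu0 Lam0 Y (n + l) y)\<^sup>2
                                / known_post_density Gam mu0 Lam0 Y n y)"
proof -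
  have "pos_def_form Gam" "pos_def_form Lam0"
    using assms(1,2) by (simp_all add: pos_def_mat_imp_pos_def_form)
  then show ?thesis
    unfolding known_post_density_eq using assms(3)
    by (intro integrable_gauss_density_sq_ratio[OF _ known_post_precision_add] pos_def_form_scaleR
        pos_def_form_imp_psd_form pos_def_form_matrix_inv pos_def_form_snd_known_post) auto
qed

definition unknown_post_scale ::
    "real^'r \<Rightarrow> real \<Rightarrow> real \<Rightarrow> real^'r^'r \<Rightarrow> (nat \<Rightarrow> real^'r) \<Rightarrow> nat \<Rightarrow> real^'r^'r::finite" where
  "unknown_post_scale mu0 ka0 up0 Xi0 Y n =
     (case unknown_post mu0 ka0 up0 Xi0 Y n of (mu, ka, up, Xi) \<Rightarrow>
        (1 / (ka * (up - real CARD('r) + 1))) *\<^sub>R Xi)"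

lemma unknown_post_kappa: "fst (snd (unknown_post mu0 ka0 up0 Xi0 Y k)) = ka0 + real k"
  by (induction k) (simp_all add: split_beta Let_def)

lemma unknown_post_upsilon: "fst (snd (snd (unknown_post mu0 ka0 up0 Xi0 Y k))) = up0 + real k"
  by (induction k) (simp_all add: split_beta Let_def)

lemma unknown_post_density_eq:
  "unknown_post_density mu0 ka0 up0 Xi0 Y n =
     student_t_density (up0 + real n - real CARD('r) + 1) (fst (unknown_post mu0 ka0 up0 Xi0 Y n))
       (unknown_post_scale mu0 ka0 up0 Xi0 Y n)"
  for Y :: "nat \<Rightarrow> real^'r::finite"
  by (simp add: unknown_post_density_def unknown_post_scale_def split_beta unknown_post_upsilon)

lemma pos_def_form_unknown_post_Xi:
  assumes "pos_def_form Xi0" and "ka0 > 0"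
  shows "pos_def_form (snd (snd (snd (unknown_post mu0 ka0 up0 Xi0 Y k))))"
proof (induction k)
  case (Suc k)
  define ka where "ka = fst (snd (unknown_post mu0 ka0 up0 Xi0 Y k))"
  have "ka > 0" using assms(2) by (simp add: ka_def unknown_post_kappa add_pos_nonneg)
  have "snd (snd (snd (unknown_post mu0 ka0 up0 Xi0 Y (Suc k)))) =
        snd (snd (snd (unknown_post mu0 ka0 up0 Xi0 Y k))) + (ka / (ka + 1)) *\<^sub>R
          outer_prod (Y (Suc k) - fst (unknown_post mu0 ka0 up0 Xi0 Y k))
                     (Y (Suc k) - fst (unknown_post mu0 ka0 up0 Xi0 Y k))"
    by (simp add: split_beta Let_def ka_def)
  then show ?case
    using Suc \<open>ka > 0\<close> by (simp add: pos_def_form_add_psd_form psd_form_scaleR psd_form_outer_prod)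
qed (simp add: assms)

lemma pos_def_form_unknown_post_scale:
  fixes Y :: "nat \<Rightarrow> real^'r::finite"
  assumes "ka0 > 0" and "up0 > real CARD('r) - 1" and "pos_def_mat Xi0"
  shows "pos_def_form (unknown_post_scale mu0 ka0 up0 Xi0 Y n)"
  unfolding unknown_post_scale_def split_beta unknown_post_kappa unknown_post_upsilon using assms
  by (intro pos_def_form_scaleR pos_def_form_unknown_post_Xi pos_def_mat_imp_pos_def_form)
    (auto intro!: mult_pos_pos add_pos_nonneg)

lemma unknown_post_density_pos:
  fixes Y :: "nat \<Rightarrow> real^'r::finite"
  assumes "ka0 > 0" and "up0 > real CARD('r) - 1" and "pos_def_mat Xi0"
    and "prob_space M" and "distributed M lborel Z (unknown_post_density mu0 ka0 up0 Xi0 Y n)"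
  shows "unknown_post_density mu0 ka0 up0 Xi0 Y n y > 0"
  using assms(4,5) unfolding unknown_post_density_eq
  by (rule distributed_student_t_density_pos)
    (use assms(2) in \<open>simp_all add: pos_def_form_imp_psd_form pos_def_form_matrix_inv
        pos_def_form_unknown_post_scale[OF assms(1-3)]\<close>)

lemma integrable_unknown_post_density_sq_ratio:
  fixes Y :: "nat \<Rightarrow> real^'r::finite"
  assumes "ka0 > 0" and "up0 > real CARD('r) - 1" and "pos_def_mat Xi0"
  shows "integrable lborel (\<lambda>y. (unknown_post_density mu0 ka0 up0 Xi0 Y (n + l) y)\<^sup>2
                                / unknown_post_density mu0 ka0 up0 Xi0 Y n y)"
  unfolding unknown_post_density_eq
  by (rule integrable_student_t_density_sq_ratio)
    (use assms(2) in \<open>simp_all add: pos_def_form_imp_psd_form pos_def_form_matrix_inv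
        pos_def_form_unknown_post_scale[OF assms]\<close>)

theorem theorem2:
  fixes xs :: "'r::finite \<Rightarrow> real^'d"
    and Y :: "nat \<Rightarrow> real^'r"
    and n l :: nat
  assumes "l \<ge> 1"
  shows
   "(\<forall>(Gam::real^'r^'r) mu0 Lam0 (M::'a measure) (Z::'a \<Rightarrow> real^'r).
       pos_def_mat Gam \<and> pos_def_mat Lam0 \<and> prob_space M \<and>
       distributed M lborel Z (known_post_density Gam mu0 Lam0 Y n) \<longrightarrow>
       (let p = (\<lambda>\<omega>. is_estimator (convex_vectors xs) (known_post_density Gam mu0 Lam0 Y n)
                        (known_post_density Gam mu0 Lam0 Y (n + l)) (Z \<omega>))
        in integrable M p \<and>
           (\<integral>\<omega>. p \<omega> \<partial>M) = measure (density lborel (known_post_density Gam mu0 Lam0 Y (n + l)))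
                                    (convex_vectors xs) \<and>
           integrable M (\<lambda>\<omega>. (p \<omega>)\<^sup>2)))
  \<and>
    (\<forall>mu0 ka0 up0 (Xi0::real^'r^'r) (M::'b measure) (Z::'b \<Rightarrow> real^'r).
       ka0 > 0 \<and> up0 > real CARD('r) - 1 \<and> pos_def_mat Xi0 \<and> prob_space M \<and>
       distributed M lborel Z (unknown_post_density mu0 ka0 up0 Xi0 Y n) \<longrightarrow>
       (let p = (\<lambda>\<omega>. is_estimator (convex_vectors xs) (unknown_post_density mu0 ka0 up0 Xi0 Y n)
                        (unknown_post_density mu0 ka0 up0 Xi0 Y (n + l)) (Z \<omega>))
        in integrable M p \<and>
           (\<integral>\<omega>. p \<omega> \<partial>M) = measure (density lborel (unknown_post_density mu0 ka0 up0 Xi0 Y (n + l)))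
                                    (convex_vectors xs) \<and>
           integrable M (\<lambda>\<omega>. (p \<omega>)\<^sup>2)))"
proof (intro conjI allI impI, goal_cases known unknown)
  case (known Gam mu0 Lam0 M Z)
  then have P: "prob_space M" and D: "distributed M lborel Z (known_post_density Gam mu0 Lam0 Y n)"
    by blast+
  note is_estimator_facts = integrable_is_estimator integral_is_estimator integrable_is_estimator_square
  show ?case
    unfolding Let_def using known assms
    by (intro conjI is_estimator_facts[OF P D known_post_density_pos[OF P D] sets_borel_convex_vectors]
        integrable_known_post_density_sq_ratio)
      (auto simp: known_post_density_eq gauss_density_nonneg)
next
  case (unknown mu0 ka0 up0 Xi0 M Z)
  then have P: "prob_space M" and D: "distributed M lborel Z (unknown_post_density mu0 ka0 up0 Xi0 Y n)"
    by blast+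
  note is_estimator_facts = integrable_is_estimator integral_is_estimator integrable_is_estimator_square
  show ?case
    unfolding Let_def using unknown
    by (intro conjI is_estimator_facts[OF P D unknown_post_density_pos[OF _ _ _ P D] sets_borel_convex_vectors]
        integrable_unknown_post_density_sq_ratio)
      (auto simp: unknown_post_density_eq intro!: student_t_density_nonneg)
qed

end
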